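(* Consider the Gaussian mean estimation problem described in the context (with $\mu=0$), fix $i$, and let $\tilde G_i$ be as defined there. For any $\eta\ge0$ and any realization $Z_i^\pm=z_\pm=(z_-,z_+)\in\mathbb R^2$: if $|z_+|\ne|z_-|$, then $$\psi^{*-1}_{\tilde G_i|Z_i^\pm}(\eta,z_\pm)\le B_{z_\pm,n}(\eta):=|z_+^2-z_-^2|\sqrt{2\eta}+\frac{2\sigma^2(z_+-z_-)^2}{n|z_+^2-z_-^2|}\sqrt{2\eta}+\frac{4\max(z_+^2,z_-^2)}{n}$$ (so that $B_{z_\pm,n}(\eta)=|z_+^2-z_-^2|\sqrt{2\eta}+\Theta(1/n)$); and if $|z_+|=|z_-|$, then $$\psi^{*-1}_{\tilde G_i|Z_i^\pm}(\eta,z_\pm)\le4\sigma\sqrt{\frac{2\eta}{n}}\,|z_+|+\frac{4\max(z_+^2,z_-^2)}{n}.$$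
   Context: Gaussian mean estimation: $\mathcal Z=\mathcal W=\mathbb R$, data distribution $\xi=N(\mu,\sigma^2)$ with $\mu=0$ and $\sigma>0$, loss $\ell(w,z)=(w-z)^2$, and the algorithm outputs the average of its $n\ge2$ training samples. Supersample construction: $Z_j^-,Z_j^+$ ($j=1,\dots,n$) are $2n$ i.i.d. samples from $\xi$, $Z_j^\pm=(Z_j^-,Z_j^+)$; $R_1,\dots,R_n$ i.i.d. uniform on $\{-1,1\}$ independent of the samples; $W=\frac1n\sum_j Z_j^{R_j}$ with $Z_j^1=Z_j^+$, $Z_j^{-1}=Z_j^-$. Let $(\tilde W_i,\tilde R_i)$ be a decoupled pair of $(W,R_i)$ conditioned on $Z_i^\pm$: jointly defined with $Z_i^\pm$ so that $(\tilde W_i,Z_i^\pm)\overset{D}{=}(W,Z_i^\pm)$, $(\tilde R_i,Z_i^\pm)\overset{D}{=}(R_i,Z_i^\pm)$, and $\tilde W_i-Z_i^\pm-\tilde R_i$ is a Markov chain; and $\tilde G_i=\tilde R_i(\ell(\tilde W_i,Z_i^-)-\ell(\tilde W_i,Z_i^+))$. For random $F,U$: $\psi_{F|U}(\lambda,u)=\ln\mathbb E[e^{\lambda(F-\mathbb E[F|U=u])}\mid U=u]$ and $\psi^{*-1}_{F|U}(\eta,u)=\inf_{\lambda>0}\frac{\eta+\psi_{F|U}(\lambda,u)}{\lambda}$. *)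

theory Defs
  imports "HOL-Probability.Probability"
begin

definition gauss :: "real \<Rightarrow> real measure" where
  "gauss \<sigma> = density lborel (normal_density 0 \<sigma>)"

definition rad :: "real measure" where
  "rad = measure_pmf (pmf_of_set {-1, 1})"

text \<open>Selector: Z^1 = Z^+, Z^{-1} = Z^-; a pair is (Z^-, Z^+).\<close>
definition sel :: "real \<times> real \<Rightarrow> real \<Rightarrow> real" where
  "sel z r = (if r = 1 then snd z else fst z)"

text \<open>Supersample space: coordinates j < n carry ((Z_j^-, Z_j^+), R_j), all independent.\<close>
definition super_space :: "real \<Rightarrow> nat \<Rightarrow> (nat \<Rightarrow> (real \<times> real) \<times> real) measure" where
  "super_space \<sigma> n = PiM {..<n} (\<lambda>_. (gauss \<sigma> \<Otimes>\<^sub>M gauss \<sigma>) \<Otimes>\<^sub>M rad)"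

definition W_cond :: "nat \<Rightarrow> nat \<Rightarrow> real \<times> real \<Rightarrow> (nat \<Rightarrow> (real \<times> real) \<times> real) \<Rightarrow> real" where
  "W_cond n i z \<omega> = (1 / real n) *
     (\<Sum>j<n. if j = i then sel z (snd (\<omega> j)) else sel (fst (\<omega> j)) (snd (\<omega> j)))"

text \<open>Conditional law of W given Z_i^pm = z (= law of the decoupled W-tilde_i given Z_i^pm = z).\<close>
definition Wtilde_law :: "real \<Rightarrow> nat \<Rightarrow> nat \<Rightarrow> real \<times> real \<Rightarrow> real measure" where
  "Wtilde_law \<sigma> n i z = distr (super_space \<sigma> n) borel (W_cond n i z)"

text \<open>Conditional joint law of (W-tilde_i, R-tilde_i) given Z_i^pm = z: product, by the Markov chain
  property; R-tilde_i given Z_i^pm is uniform on {-1,1} as R_i is independent of the samples.\<close>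
definition decoupled_law :: "real \<Rightarrow> nat \<Rightarrow> nat \<Rightarrow> real \<times> real \<Rightarrow> (real \<times> real) measure" where
  "decoupled_law \<sigma> n i z = Wtilde_law \<sigma> n i z \<Otimes>\<^sub>M rad"

definition loss :: "real \<Rightarrow> real \<Rightarrow> real" where
  "loss w z = (w - z)^2"

text \<open>G-tilde_i as a function of (W-tilde_i, R-tilde_i) at Z_i^pm = z = (z_-, z_+).\<close>
definition Gt :: "real \<times> real \<Rightarrow> real \<times> real \<Rightarrow> real" where
  "Gt z p = snd p * (loss (fst p) (fst z) - loss (fst p) (snd z))"

definition psi :: "real \<Rightarrow> nat \<Rightarrow> nat \<Rightarrow> real \<Rightarrow> real \<times> real \<Rightarrow> real" where
  "psi \<sigma> n i l z =
     ln (\<integral>p. exp (l * (Gt z p - (\<integral>q. Gt z q \<partial>decoupled_law \<sigma> n i z))) \<partial>decoupled_law \<sigma> n i z)"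

definition psi_star_inv :: "real \<Rightarrow> nat \<Rightarrow> nat \<Rightarrow> real \<Rightarrow> real \<times> real \<Rightarrow> real" where
  "psi_star_inv \<sigma> n i \<eta> z = (INF l\<in>{0<..}. (\<eta> + psi \<sigma> n i l z) / l)"

end

theory Submission
  imports Defs
begin

text \<open>Write \<open>a = z\<^sub>+ - z\<^sub>-\<close> and \<open>D = z\<^sub>+\<^sup>2 - z\<^sub>-\<^sup>2\<close>. Since the loss is quadratic,
  \<open>G\<^sub>i = R (2 a W - D)\<close> with \<open>R\<close> a fair sign independent of \<open>W\<close>, so \<open>G\<^sub>i\<close> is centred and its
  moment generating function is an average of two moment generating functions of \<open>W\<close>.
  Given \<open>Z\<^sub>i\<^sup>\<plusminus>\<close>, \<open>W\<close> is \<open>1/n\<close> times a fair choice between \<open>z\<^sub>\<plusminus>\<close> plus \<open>n - 1\<close> independent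
  \<open>N(0, \<sigma>\<^sup>2)\<close> variables, so its moment generating function is explicit. The bounds
  \<open>cosh x \<le> exp (x\<^sup>2/2)\<close> and \<open>cosh (x + e) \<le> cosh x \<cdot> exp \<bar>e\<bar>\<close> then yield
  \<open>\<psi>(\<lambda>) \<le> \<lambda>\<^sup>2 K + \<lambda> E\<close> with \<open>K = D\<^sup>2/2 + 2 a\<^sup>2 \<sigma>\<^sup>2/n\<close> and \<open>E = 4 max(z\<^sub>+\<^sup>2, z\<^sub>-\<^sup>2)/n\<close>,
  and optimising \<open>\<eta>/\<lambda> + \<lambda> K + E\<close> over \<open>\<lambda> > 0\<close> gives \<open>E + 2 \<surd>(\<eta> K)\<close>.\<close>

text \<open>\<open>cosh\<close> is the moment generating function of a fair sign, so this is Hoeffding's lemma.\<close>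

lemma cosh_le_exp_half_square: "cosh (x :: real) \<le> exp (x\<^sup>2 / 2)"
proof -
  have "1 + 1 / 2 * (exp (2 * \<bar>x\<bar>) - 1) = exp \<bar>x\<bar> * cosh \<bar>x\<bar>"
    by (simp add: cosh_field_def field_simps exp_add[symmetric])
  then have "ln (cosh x) = - (2 * \<bar>x\<bar>) * (1 / 2) + ln (1 + 1 / 2 * (exp (2 * \<bar>x\<bar>) - 1))"
    by (simp add: ln_mult)
  also have "\<dots> \<le> (2 * \<bar>x\<bar>)\<^sup>2 / 8"
    by (rule Hoeffdings_lemma_aux) simp_all
  also have "\<dots> = x\<^sup>2 / 2"
    by (simp add: power2_eq_square)
  finally show ?thesis
    by (metis cosh_real_pos exp_le_cancel_iff exp_ln)
qed

lemma cosh_add_le: "cosh (x + e :: real) \<le> cosh x * exp \<bar>e\<bar>"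
proof -
  have "exp x * exp e + exp (- x) * exp (- e) \<le> exp x * exp \<bar>e\<bar> + exp (- x) * exp \<bar>e\<bar>"
    by (intro add_mono mult_left_mono) auto
  then show ?thesis
    by (simp add: cosh_field_def exp_add[symmetric] algebra_simps)
qed

lemma abs_diff_mult_le_max_square:
  fixes zm zp z :: real
  assumes "z \<in> {zp, zm}"
  shows "\<bar>zp - zm\<bar> * \<bar>z\<bar> \<le> 2 * max (zp\<^sup>2) (zm\<^sup>2)"
proof -
  define m where "m = max \<bar>zp\<bar> \<bar>zm\<bar>"
  have "\<bar>zp - zm\<bar> \<le> 2 * m" "\<bar>z\<bar> \<le> m"
    using assms by (auto simp: m_def)
  then have "\<bar>zp - zm\<bar> * \<bar>z\<bar> \<le> 2 * m * m"
    by (intro mult_mono) auto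
  also have "\<dots> = 2 * (m * m)"
    by simp
  also have "m * m = max (zp\<^sup>2) (zm\<^sup>2)"
    by (auto simp: m_def max_def abs_le_square_iff power2_eq_square)
  finally show ?thesis by simp
qed

lemma sqrt_square_add_le:
  fixes d q :: real
  assumes "d \<noteq> 0" "q \<ge> 0"
  shows "sqrt (d\<^sup>2 + q) \<le> \<bar>d\<bar> + q / (2 * \<bar>d\<bar>)"
proof (rule real_le_lsqrt)
  have "2 * \<bar>d\<bar> * (q / (2 * \<bar>d\<bar>)) = q"
    using assms(1) by simp
  then show "d\<^sup>2 + q \<le> (\<bar>d\<bar> + q / (2 * \<bar>d\<bar>))\<^sup>2"
    unfolding power2_sum by simp
qed (use assms in simp)

lemma INF_le_add_two_sqrt:
  fixes F :: "real \<Rightarrow> real" and \<eta> K E :: real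
  assumes bdd: "bdd_below (F ` {0<..})"
    and F_le: "\<And>l. l > 0 \<Longrightarrow> F l \<le> \<eta> / l + l * K + E"
    and "\<eta> \<ge> 0" "K \<ge> 0"
  shows "(INF l\<in>{0<..}. F l) \<le> E + 2 * sqrt (\<eta> * K)"
proof -
  have INF_le: "(INF l\<in>{0<..}. F l) \<le> \<eta> / l + l * K + E" if "l > 0" for l
    using cINF_lower[OF bdd, of l] F_le[OF that] that by simp
  show ?thesis
  proof (cases "\<eta> > 0 \<and> K > 0")
    case True
    define l where "l = sqrt \<eta> / sqrt K"
    have "l > 0"
      using True by (simp add: l_def)
    moreover have "\<eta> / l = sqrt (\<eta> * K)" "l * K = sqrt (\<eta> * K)"
      using True by (simp_all add: l_def real_sqrt_mult field_simps)
    ultimately show ?thesis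
      using INF_le[of l] by simp
  next
    case False
    with assms(3,4) have "\<eta> = 0 \<or> K = 0"
      by auto
    have "(INF l\<in>{0<..}. F l) \<le> E + e" if "e > 0" for e
    proof (cases "\<eta> = 0")
      case True
      have "e / (K + 1) * K \<le> e"
        using \<open>e > 0\<close> assms(4) by (simp add: field_simps)
      then show ?thesis
        using INF_le[of "e / (K + 1)"] True \<open>e > 0\<close> assms(4) by simp
    next
      case False
      with \<open>\<eta> = 0 \<or> K = 0\<close> have "K = 0"
        by simp
      have "\<eta> / ((\<eta> + 1) / e) \<le> e"
        using \<open>e > 0\<close> assms(3) by (simp add: field_simps)
      then show ?thesis
        using INF_le[of "(\<eta> + 1) / e"] \<open>K = 0\<close> \<open>e > 0\<close> assms(3) by simp
    qed
    then have "(INF l\<in>{0<..}. F l) \<le> E"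
      by (rule field_le_epsilon)
    with \<open>\<eta> = 0 \<or> K = 0\<close> show ?thesis
      by auto
  qed
qed

lemma ennreal_average: "0 \<le> a \<Longrightarrow> 0 \<le> b \<Longrightarrow> (ennreal a + ennreal b) / 2 = ennreal ((a + b) / 2)"
  by (metis divide_ennreal ennreal_numeral ennreal_plus zero_less_numeral add_nonneg_nonneg)

lemma prob_space_gauss: "\<sigma> > 0 \<Longrightarrow> prob_space (gauss \<sigma>)"
  unfolding gauss_def by (rule prob_space_normal_density)

lemma sets_gauss [simp, measurable_cong]: "sets (gauss \<sigma>) = sets borel"
  unfolding gauss_def by simp

lemma nn_integral_gauss_exp:
  assumes "\<sigma> > 0"
  shows "(\<integral>\<^sup>+x. exp (u * x) \<partial>gauss \<sigma>) = exp (u\<^sup>2 * \<sigma>\<^sup>2 / 2)"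
proof -
  have shift: "normal_density 0 \<sigma> x * exp (u * x) = exp (u\<^sup>2 * \<sigma>\<^sup>2 / 2) * normal_density (u * \<sigma>\<^sup>2) \<sigma> x" for x
  proof -
    have "- ((x - 0)\<^sup>2) / (2 * \<sigma>\<^sup>2) + u * x = u\<^sup>2 * \<sigma>\<^sup>2 / 2 + - ((x - u * \<sigma>\<^sup>2)\<^sup>2) / (2 * \<sigma>\<^sup>2)"
      using assms by (simp add: field_simps power2_eq_square)
    then show ?thesis
      unfolding normal_density_def by (simp add: exp_add[symmetric] mult.commute mult.left_commute)
  qed
  interpret shifted: prob_space "density lborel (normal_density (u * \<sigma>\<^sup>2) \<sigma>)"
    using assms by (rule prob_space_normal_density)
  have "(\<integral>\<^sup>+x. exp (u * x) \<partial>gauss \<sigma>) = (\<integral>\<^sup>+x. ennreal (normal_density 0 \<sigma> x) * exp (u * x) \<partial>lborel)"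
    unfolding gauss_def by (subst nn_integral_density) auto
  also have "\<dots> = (\<integral>\<^sup>+x. exp (u\<^sup>2 * \<sigma>\<^sup>2 / 2) * ennreal (normal_density (u * \<sigma>\<^sup>2) \<sigma> x) \<partial>lborel)"
    by (intro nn_integral_cong) (simp add: shift[symmetric] ennreal_mult[symmetric])
  also have "\<dots> = exp (u\<^sup>2 * \<sigma>\<^sup>2 / 2) * emeasure (density lborel (normal_density (u * \<sigma>\<^sup>2) \<sigma>)) UNIV"
    by (subst nn_integral_cmult) (auto simp: emeasure_density)
  finally show ?thesis
    using shifted.emeasure_space_1 by simp
qed

lemma prob_space_rad: "prob_space rad"
  unfolding rad_def by (rule prob_space_measure_pmf)

lemma space_rad [simp]: "space rad = UNIV"
  unfolding rad_def by simp

lemma sets_rad [simp]: "sets rad = UNIV"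
  unfolding rad_def by simp

lemma pred_rad [measurable]: "Measurable.pred rad P"
  by (simp add: pred_def)

lemma borel_measurable_snd_rad [measurable]: "(\<lambda>p. f (snd p)) \<in> borel_measurable (M \<Otimes>\<^sub>M rad)"
  by (rule measurable_compose[OF measurable_snd]) (simp add: measurable_def)

lemma measurable_uminus_snd_rad [measurable]: "(\<lambda>x. - snd x) \<in> measurable (M \<Otimes>\<^sub>M rad) rad"
  by (rule measurable_compose[OF measurable_snd]) (simp add: measurable_def)

lemma nn_integral_rad: "(\<integral>\<^sup>+r. f r \<partial>rad) = (f 1 + f (-1)) / 2"
  unfolding rad_def by (subst nn_integral_pmf_of_set) (auto simp: add.commute)

lemma distr_rad_uminus: "distr rad rad uminus = rad"
proof -
  have "distr rad rad uminus = distr rad (count_space UNIV) uminus"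
    by (rule distr_cong) auto
  also have "\<dots> = measure_pmf (map_pmf uminus (pmf_of_set {-1, 1::real}))"
    by (simp add: map_pmf_rep_eq rad_def)
  also have "map_pmf uminus (pmf_of_set {-1, 1::real}) = pmf_of_set {-1, 1}"
    by (subst map_pmf_of_set_inj) (auto simp: insert_commute)
  finally show ?thesis by (simp add: rad_def)
qed

definition supersample_coord :: "real \<Rightarrow> ((real \<times> real) \<times> real) measure" where
  "supersample_coord \<sigma> = (gauss \<sigma> \<Otimes>\<^sub>M gauss \<sigma>) \<Otimes>\<^sub>M rad"

lemma super_space_eq_PiM: "super_space \<sigma> n = PiM {..<n} (\<lambda>_. supersample_coord \<sigma>)"
  by (simp add: super_space_def supersample_coord_def)

lemma prob_space_supersample_coord: "\<sigma> > 0 \<Longrightarrow> prob_space (supersample_coord \<sigma>)"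
  unfolding supersample_coord_def by (intro prob_space_pair prob_space_gauss prob_space_rad)

lemma prob_space_super_space: "\<sigma> > 0 \<Longrightarrow> prob_space (super_space \<sigma> n)"
  unfolding super_space_eq_PiM by (intro prob_space_PiM prob_space_supersample_coord)

lemma measurable_sel [measurable]:
  "(\<lambda>x. sel (fst x) (snd x)) \<in> borel_measurable ((gauss \<sigma> \<Otimes>\<^sub>M gauss \<sigma>) \<Otimes>\<^sub>M rad)"
  "(\<lambda>x. sel z (snd x)) \<in> borel_measurable (M \<Otimes>\<^sub>M rad)"
  unfolding sel_def by measurable

lemma nn_integral_exp_sel:
  assumes "\<sigma> > 0"
  shows "(\<integral>\<^sup>+x. exp (u * sel (fst x) (snd x)) \<partial>supersample_coord \<sigma>) = exp (u\<^sup>2 * \<sigma>\<^sup>2 / 2)"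
proof -
  interpret R: prob_space rad by (rule prob_space_rad)
  interpret G: prob_space "gauss \<sigma>" using assms by (rule prob_space_gauss)
  have fst_snd: "(\<integral>\<^sup>+x. exp (u * snd x) \<partial>(gauss \<sigma> \<Otimes>\<^sub>M gauss \<sigma>)) = exp (u\<^sup>2 * \<sigma>\<^sup>2 / 2)"
    "(\<integral>\<^sup>+x. exp (u * fst x) \<partial>(gauss \<sigma> \<Otimes>\<^sub>M gauss \<sigma>)) = exp (u\<^sup>2 * \<sigma>\<^sup>2 / 2)"
    by (subst G.nn_integral_fst[symmetric]; simp add: nn_integral_gauss_exp[OF assms] G.emeasure_space_1)+
  have "(\<integral>\<^sup>+x. exp (u * sel (fst x) (snd x)) \<partial>supersample_coord \<sigma>)
      = (\<integral>\<^sup>+y. \<integral>\<^sup>+r. exp (u * sel y r) \<partial>rad \<partial>(gauss \<sigma> \<Otimes>\<^sub>M gauss \<sigma>))"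
    unfolding supersample_coord_def by (subst R.nn_integral_fst[symmetric]) auto
  also have "\<dots> = (\<integral>\<^sup>+y. (ennreal (exp (u * snd y)) + exp (u * fst y)) / 2 \<partial>(gauss \<sigma> \<Otimes>\<^sub>M gauss \<sigma>))"
    by (simp add: nn_integral_rad sel_def)
  also have "\<dots> = (ennreal (exp (u\<^sup>2 * \<sigma>\<^sup>2 / 2)) + exp (u\<^sup>2 * \<sigma>\<^sup>2 / 2)) / 2"
    by (simp add: divide_ennreal_def nn_integral_multc nn_integral_add fst_snd)
  finally show ?thesis
    by (simp add: ennreal_average)
qed

lemma nn_integral_exp_sel_fixed:
  assumes "\<sigma> > 0"
  shows "(\<integral>\<^sup>+x. exp (u * sel z (snd x)) \<partial>supersample_coord \<sigma>)
    = ennreal ((exp (u * snd z) + exp (u * fst z)) / 2)"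
proof -
  interpret R: prob_space rad by (rule prob_space_rad)
  interpret GG: prob_space "gauss \<sigma> \<Otimes>\<^sub>M gauss \<sigma>"
    using assms by (intro prob_space_pair prob_space_gauss)
  have "(\<integral>\<^sup>+x. exp (u * sel z (snd x)) \<partial>supersample_coord \<sigma>)
      = (\<integral>\<^sup>+y. \<integral>\<^sup>+r. exp (u * sel z r) \<partial>rad \<partial>(gauss \<sigma> \<Otimes>\<^sub>M gauss \<sigma>))"
    unfolding supersample_coord_def by (subst R.nn_integral_fst[symmetric]) auto
  also have "\<dots> = (ennreal (exp (u * snd z)) + exp (u * fst z)) / 2"
    by (simp add: nn_integral_rad sel_def GG.emeasure_space_1)
  finally show ?thesis
    by (simp add: ennreal_average)
qed

lemma measurable_W_cond [measurable]: "W_cond n i z \<in> borel_measurable (super_space \<sigma> n)"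
  unfolding super_space_def W_cond_def by measurable

lemma nn_integral_exp_W_cond:
  assumes "\<sigma> > 0" "i < n"
  shows "(\<integral>\<^sup>+\<omega>. exp (t * W_cond n i z \<omega>) \<partial>super_space \<sigma> n)
    = ennreal ((exp (t / n * snd z) + exp (t / n * fst z)) / 2 * exp ((t / n)\<^sup>2 * \<sigma>\<^sup>2 / 2) ^ (n - 1))"
proof -
  interpret P: product_sigma_finite "\<lambda>_. supersample_coord \<sigma>"
    unfolding product_sigma_finite_def
    using prob_space_supersample_coord[OF assms(1)] prob_space_imp_sigma_finite by blast
  define g where "g j x = (if j = i then sel z (snd x) else sel (fst x) (snd x))" for j x
  have g_measurable: "g j \<in> borel_measurable (supersample_coord \<sigma>)" for j
    unfolding g_def supersample_coord_def by (cases "j = i") simp_all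
  have exp_g_measurable: "(\<lambda>x. ennreal (exp (t / n * g j x))) \<in> borel_measurable (supersample_coord \<sigma>)" for j
    by (rule measurable_compose[OF g_measurable]) measurable
  have exp_W: "ennreal (exp (t * W_cond n i z \<omega>)) = (\<Prod>j\<in>{..<n}. ennreal (exp (t / n * g j (\<omega> j))))" for \<omega>
    by (simp add: W_cond_def sum_distrib_left g_def exp_sum prod_ennreal)
  have "(\<integral>\<^sup>+\<omega>. ennreal (exp (t * W_cond n i z \<omega>)) \<partial>super_space \<sigma> n)
      = (\<Prod>j<n. \<integral>\<^sup>+x. exp (t / n * g j x) \<partial>supersample_coord \<sigma>)"
    unfolding super_space_eq_PiM exp_W
    by (rule P.product_nn_integral_prod[where f = "\<lambda>j x. ennreal (exp (t / n * g j x))"])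
      (simp, rule exp_g_measurable)
  also have "\<dots> = (\<integral>\<^sup>+x. exp (t / n * g i x) \<partial>supersample_coord \<sigma>)
      * (\<Prod>j\<in>{..<n} - {i}. \<integral>\<^sup>+x. exp (t / n * g j x) \<partial>supersample_coord \<sigma>)"
    using assms(2) by (subst prod.remove[of _ i]) auto
  also have "(\<integral>\<^sup>+x. exp (t / n * g i x) \<partial>supersample_coord \<sigma>)
      = ennreal ((exp (t / n * snd z) + exp (t / n * fst z)) / 2)"
    unfolding g_def using nn_integral_exp_sel_fixed[OF assms(1), of "t / n" z] by simp
  also have "(\<Prod>j\<in>{..<n} - {i}. \<integral>\<^sup>+x. exp (t / n * g j x) \<partial>supersample_coord \<sigma>)
      = (\<Prod>j\<in>{..<n} - {i}. ennreal (exp ((t / n)\<^sup>2 * \<sigma>\<^sup>2 / 2)))"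
    using nn_integral_exp_sel[OF assms(1), of "t / n"] by (intro prod.cong refl) (simp add: g_def)
  also have "\<dots> = ennreal (exp ((t / n)\<^sup>2 * \<sigma>\<^sup>2 / 2)) ^ (n - 1)"
    using assms(2) by simp
  finally show ?thesis
    by (simp add: ennreal_mult[symmetric] ennreal_power add_nonneg_nonneg)
qed

lemma sets_Wtilde_law [simp, measurable_cong]: "sets (Wtilde_law \<sigma> n i z) = sets borel"
  by (simp add: Wtilde_law_def)

lemma prob_space_Wtilde_law: "\<sigma> > 0 \<Longrightarrow> prob_space (Wtilde_law \<sigma> n i z)"
  unfolding Wtilde_law_def by (rule prob_space.prob_space_distr[OF prob_space_super_space]) simp_all

lemma nn_integral_exp_Wtilde_law:
  assumes "\<sigma> > 0" "i < n"
  shows "(\<integral>\<^sup>+w. exp (t * w) \<partial>Wtilde_law \<sigma> n i (zm, zp))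
    = ennreal ((exp (t / n * zp) + exp (t / n * zm)) / 2 * exp ((t / n)\<^sup>2 * \<sigma>\<^sup>2 / 2) ^ (n - 1))"
proof -
  have "(\<integral>\<^sup>+w. exp (t * w) \<partial>Wtilde_law \<sigma> n i (zm, zp))
      = (\<integral>\<^sup>+\<omega>. exp (t * W_cond n i (zm, zp) \<omega>) \<partial>super_space \<sigma> n)"
    unfolding Wtilde_law_def by (rule nn_integral_distr) simp_all
  also have "\<dots> = ennreal ((exp (t / n * zp) + exp (t / n * zm)) / 2 * exp ((t / n)\<^sup>2 * \<sigma>\<^sup>2 / 2) ^ (n - 1))"
    by (rule nn_integral_exp_W_cond[OF assms, of t "(zm, zp)", unfolded fst_conv snd_conv])
  finally show ?thesis .
qed

lemma Gt_eq: "Gt (zm, zp) (w, r) = r * (2 * (zp - zm) * w - (zp\<^sup>2 - zm\<^sup>2))"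
  by (simp add: Gt_def loss_def power2_eq_square algebra_simps)

lemma measurable_Gt [measurable]: "Gt z \<in> borel_measurable (Wtilde_law \<sigma> n i z' \<Otimes>\<^sub>M rad)"
  unfolding Gt_def loss_def by measurable

text \<open>Flipping the sign of \<open>R\<close> preserves the decoupled law and negates \<open>G\<^sub>i\<close>.\<close>

lemma integral_Gt_decoupled_law:
  assumes "\<sigma> > 0"
  shows "(\<integral>q. Gt z q \<partial>decoupled_law \<sigma> n i z) = 0"
proof -
  let ?W = "Wtilde_law \<sigma> n i z" and ?flip = "\<lambda>(w, r). (w, - r :: real)"
  interpret R: prob_space rad by (rule prob_space_rad)
  interpret W: prob_space ?W using assms by (rule prob_space_Wtilde_law)
  have flip_measurable: "?flip \<in> measurable (decoupled_law \<sigma> n i z) (decoupled_law \<sigma> n i z)"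
    unfolding decoupled_law_def by measurable
  have "distr ?W ?W (\<lambda>w. w) \<Otimes>\<^sub>M distr rad rad uminus = distr (?W \<Otimes>\<^sub>M rad) (?W \<Otimes>\<^sub>M rad) ?flip"
    by (rule pair_measure_distr) (auto simp: distr_rad_uminus R.sigma_finite_measure_axioms measurable_def)
  then have flip_invariant: "distr (decoupled_law \<sigma> n i z) (decoupled_law \<sigma> n i z) ?flip = decoupled_law \<sigma> n i z"
    by (simp add: distr_rad_uminus decoupled_law_def)
  have "(\<integral>q. Gt z q \<partial>decoupled_law \<sigma> n i z) = (\<integral>q. Gt z (?flip q) \<partial>decoupled_law \<sigma> n i z)"
    by (subst flip_invariant[symmetric], subst integral_distr[OF flip_measurable]) (auto simp: decoupled_law_def)
  also have "\<dots> = (\<integral>q. - Gt z q \<partial>decoupled_law \<sigma> n i z)"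
    by (intro Bochner_Integration.integral_cong) (auto simp: Gt_def)
  finally show ?thesis by simp
qed

lemma nn_integral_exp_Gt:
  fixes l zm zp :: real
  assumes "\<sigma> > 0" "i < n"
  defines "t \<equiv> 2 * l * (zp - zm) / n" and "D \<equiv> zp\<^sup>2 - zm\<^sup>2"
  shows "(\<integral>\<^sup>+q. exp (l * Gt (zm, zp) q) \<partial>decoupled_law \<sigma> n i (zm, zp))
    = ennreal (exp (t\<^sup>2 * \<sigma>\<^sup>2 / 2) ^ (n - 1) * ((cosh (t * zp - l * D) + cosh (t * zm - l * D)) / 2))"
proof -
  let ?W = "Wtilde_law \<sigma> n i (zm, zp)" and ?Q = "exp (t\<^sup>2 * \<sigma>\<^sup>2 / 2) ^ (n - 1)"
  interpret R: prob_space rad by (rule prob_space_rad)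
  have exp_Gt: "exp (l * Gt (zm, zp) (w, 1)) = exp (- (l * D)) * exp (2 * l * (zp - zm) * w)"
    "exp (l * Gt (zm, zp) (w, -1)) = exp (l * D) * exp (- (2 * l * (zp - zm)) * w)" for w
    by (simp_all add: Gt_eq D_def exp_add[symmetric] algebra_simps)
  have mgf_pos: "(\<integral>\<^sup>+w. exp (2 * l * (zp - zm) * w) \<partial>?W) = ennreal ((exp (t * zp) + exp (t * zm)) / 2 * ?Q)"
    unfolding t_def by (rule nn_integral_exp_Wtilde_law[OF assms(1,2)])
  have mgf_neg: "(\<integral>\<^sup>+w. exp (- (2 * l * (zp - zm)) * w) \<partial>?W) = ennreal ((exp (- (t * zp)) + exp (- (t * zm))) / 2 * ?Q)"
    using nn_integral_exp_Wtilde_law[OF assms(1,2), where t = "- (2 * l * (zp - zm))"] by (simp add: t_def)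
  have "(\<integral>\<^sup>+q. exp (l * Gt (zm, zp) q) \<partial>decoupled_law \<sigma> n i (zm, zp))
      = (\<integral>\<^sup>+w. \<integral>\<^sup>+r. exp (l * Gt (zm, zp) (w, r)) \<partial>rad \<partial>?W)"
    unfolding decoupled_law_def by (subst R.nn_integral_fst[symmetric]) auto
  also have "\<dots> = (\<integral>\<^sup>+w. (ennreal (exp (- (l * D))) * exp (2 * l * (zp - zm) * w)
      + ennreal (exp (l * D)) * exp (- (2 * l * (zp - zm)) * w)) / 2 \<partial>?W)"
    by (simp only: nn_integral_rad exp_Gt ennreal_mult exp_ge_zero)
  also have "\<dots> = (ennreal (exp (- (l * D))) * (\<integral>\<^sup>+w. exp (2 * l * (zp - zm) * w) \<partial>?W)
      + ennreal (exp (l * D)) * (\<integral>\<^sup>+w. exp (- (2 * l * (zp - zm)) * w) \<partial>?W)) / 2"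
    by (simp add: divide_ennreal_def nn_integral_multc nn_integral_add nn_integral_cmult)
  also have "\<dots> = ennreal ((exp (- (l * D)) * ((exp (t * zp) + exp (t * zm)) / 2 * ?Q)
      + exp (l * D) * ((exp (- (t * zp)) + exp (- (t * zm))) / 2 * ?Q)) / 2)"
    unfolding mgf_pos mgf_neg
    by (simp add: ennreal_mult[symmetric] ennreal_average del: ennreal_plus)
  also have "\<dots> = ennreal (?Q * ((cosh (t * zp - l * D) + cosh (t * zm - l * D)) / 2))"
    by (simp add: cosh_field_def exp_diff exp_minus field_simps)
  finally show ?thesis .
qed

lemma cosh_tilted_sample_le:
  fixes l zm zp z :: real and n :: nat
  assumes "z \<in> {zp, zm}" "l \<ge> 0"
  shows "cosh (2 * l * (zp - zm) / n * z - l * (zp\<^sup>2 - zm\<^sup>2))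
    \<le> exp ((l * (zp\<^sup>2 - zm\<^sup>2))\<^sup>2 / 2 + l * (4 * max (zp\<^sup>2) (zm\<^sup>2) / n))"
proof -
  have "\<bar>2 * l * (zp - zm) / n * z\<bar> = 2 * l / n * (\<bar>zp - zm\<bar> * \<bar>z\<bar>)"
    using assms(2) by (simp add: abs_mult)
  also have "\<dots> \<le> 2 * l / n * (2 * max (zp\<^sup>2) (zm\<^sup>2))"
    using abs_diff_mult_le_max_square[OF assms(1)] assms(2) by (intro mult_left_mono) simp_all
  finally have shift_le: "\<bar>2 * l * (zp - zm) / n * z\<bar> \<le> l * (4 * max (zp\<^sup>2) (zm\<^sup>2) / n)"
    by (simp add: mult.left_commute)
  have "cosh (2 * l * (zp - zm) / n * z - l * (zp\<^sup>2 - zm\<^sup>2))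
      \<le> cosh (l * (zp\<^sup>2 - zm\<^sup>2)) * exp \<bar>2 * l * (zp - zm) / n * z\<bar>"
    using cosh_add_le[of "- (l * (zp\<^sup>2 - zm\<^sup>2))" "2 * l * (zp - zm) / n * z"] by simp
  also have "\<dots> \<le> exp ((l * (zp\<^sup>2 - zm\<^sup>2))\<^sup>2 / 2) * exp (l * (4 * max (zp\<^sup>2) (zm\<^sup>2) / n))"
    using shift_le by (intro mult_mono cosh_le_exp_half_square) simp_all
  finally show ?thesis
    by (simp add: exp_add)
qed

lemma ln_mgf_Gt_le:
  fixes l \<sigma> zm zp :: real and n :: nat
  assumes "n \<ge> 1" "l \<ge> 0"
  defines "t \<equiv> 2 * l * (zp - zm) / n" and "D \<equiv> zp\<^sup>2 - zm\<^sup>2" and "E \<equiv> 4 * max (zp\<^sup>2) (zm\<^sup>2) / n"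
  shows "ln (exp (t\<^sup>2 * \<sigma>\<^sup>2 / 2) ^ (n - 1) * ((cosh (t * zp - l * D) + cosh (t * zm - l * D)) / 2))
    \<le> l\<^sup>2 * (D\<^sup>2 / 2 + 2 * (zp - zm)\<^sup>2 * \<sigma>\<^sup>2 / n) + l * E"
proof -
  have cosh_le: "cosh (t * z - l * D) \<le> exp ((l * D)\<^sup>2 / 2 + l * E)" if "z \<in> {zp, zm}" for z
    unfolding t_def D_def E_def using that assms(2) by (rule cosh_tilted_sample_le)
  define C where "C = (cosh (t * zp - l * D) + cosh (t * zm - l * D)) / 2"
  have "1 \<le> C"
    using cosh_real_ge_1[of "t * zp - l * D"] cosh_real_ge_1[of "t * zm - l * D"] by (simp add: C_def)
  have "ln C \<le> ln (exp ((l * D)\<^sup>2 / 2 + l * E))"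
    using \<open>1 \<le> C\<close> cosh_le[of zp] cosh_le[of zm] by (subst ln_le_cancel_iff) (simp_all add: C_def)
  moreover have "ln (exp (t\<^sup>2 * \<sigma>\<^sup>2 / 2) ^ (n - 1)) \<le> l\<^sup>2 * (2 * (zp - zm)\<^sup>2 * \<sigma>\<^sup>2 / n)"
  proof -
    have "t\<^sup>2 = 4 * l\<^sup>2 * (zp - zm)\<^sup>2 / (real n)\<^sup>2"
      by (simp add: t_def power_divide power_mult_distrib)
    then have "ln (exp (t\<^sup>2 * \<sigma>\<^sup>2 / 2) ^ (n - 1)) = (2 * l\<^sup>2 * (zp - zm)\<^sup>2 * \<sigma>\<^sup>2) * ((real n - 1) / (real n)\<^sup>2)"
      using assms(1) by (simp add: ln_realpow of_nat_diff)
    also have "\<dots> \<le> (2 * l\<^sup>2 * (zp - zm)\<^sup>2 * \<sigma>\<^sup>2) * (1 / real n)"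
    proof (rule mult_left_mono)
      show "(real n - 1) / (real n)\<^sup>2 \<le> 1 / real n"
        using assms(1) by (simp add: field_simps power2_eq_square)
    qed simp
    finally show ?thesis
      by (simp add: field_simps)
  qed
  moreover have "ln (exp (t\<^sup>2 * \<sigma>\<^sup>2 / 2) ^ (n - 1) * C) = ln (exp (t\<^sup>2 * \<sigma>\<^sup>2 / 2) ^ (n - 1)) + ln C"
    using \<open>1 \<le> C\<close> by (intro ln_mult_pos) simp_all
  ultimately show ?thesis
    unfolding C_def[symmetric] by (simp add: power_mult_distrib algebra_simps)
qed

lemma psi_bounds:
  fixes l \<sigma> zm zp :: real
  assumes "\<sigma> > 0" "i < n" "l \<ge> 0"
  shows "0 \<le> psi \<sigma> n i l (zm, zp)"
    and "psi \<sigma> n i l (zm, zp)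
      \<le> l\<^sup>2 * ((zp\<^sup>2 - zm\<^sup>2)\<^sup>2 / 2 + 2 * (zp - zm)\<^sup>2 * \<sigma>\<^sup>2 / n) + l * (4 * max (zp\<^sup>2) (zm\<^sup>2) / n)"
proof -
  define t where "t = 2 * l * (zp - zm) / n"
  define D where "D = zp\<^sup>2 - zm\<^sup>2"
  define V where "V = exp (t\<^sup>2 * \<sigma>\<^sup>2 / 2) ^ (n - 1) * ((cosh (t * zp - l * D) + cosh (t * zm - l * D)) / 2)"
  have "1 \<le> V"
  proof -
    have "1 \<le> (cosh (t * zp - l * D) + cosh (t * zm - l * D)) / 2"
      using cosh_real_ge_1[of "t * zp - l * D"] cosh_real_ge_1[of "t * zm - l * D"] by simp
    moreover have "1 \<le> exp (t\<^sup>2 * \<sigma>\<^sup>2 / 2) ^ (n - 1)"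
      by (simp add: one_le_power)
    ultimately show ?thesis
      unfolding V_def by (metis mult_mono' mult_1_left zero_le_one)
  qed
  have nn_integral: "(\<integral>\<^sup>+q. exp (l * Gt (zm, zp) q) \<partial>decoupled_law \<sigma> n i (zm, zp)) = ennreal V"
    unfolding V_def t_def D_def by (rule nn_integral_exp_Gt[OF assms(1,2)])
  have "(\<integral>q. exp (l * Gt (zm, zp) q) \<partial>decoupled_law \<sigma> n i (zm, zp)) = V"
  proof (subst integral_eq_nn_integral)
    show "(\<lambda>q. exp (l * Gt (zm, zp) q)) \<in> borel_measurable (decoupled_law \<sigma> n i (zm, zp))"
      unfolding decoupled_law_def by measurable
  qed (use \<open>1 \<le> V\<close> in \<open>simp_all add: nn_integral\<close>)
  then have psi_eq: "psi \<sigma> n i l (zm, zp) = ln V"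
    unfolding psi_def integral_Gt_decoupled_law[OF assms(1)] by simp
  then show "0 \<le> psi \<sigma> n i l (zm, zp)"
    using \<open>1 \<le> V\<close> by simp
  show "psi \<sigma> n i l (zm, zp)
      \<le> l\<^sup>2 * ((zp\<^sup>2 - zm\<^sup>2)\<^sup>2 / 2 + 2 * (zp - zm)\<^sup>2 * \<sigma>\<^sup>2 / n) + l * (4 * max (zp\<^sup>2) (zm\<^sup>2) / n)"
    unfolding psi_eq V_def t_def D_def using assms(2,3) by (intro ln_mgf_Gt_le) simp_all
qed

lemma psi_star_inv_le:
  fixes \<sigma> \<eta> zm zp :: real
  assumes "\<sigma> > 0" "i < n" "\<eta> \<ge> 0"
  shows "psi_star_inv \<sigma> n i \<eta> (zm, zp) \<le> 4 * max (zp\<^sup>2) (zm\<^sup>2) / n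
    + sqrt (2 * \<eta>) * sqrt ((zp\<^sup>2 - zm\<^sup>2)\<^sup>2 + 4 * (zp - zm)\<^sup>2 * \<sigma>\<^sup>2 / n)"
proof -
  define K where "K = (zp\<^sup>2 - zm\<^sup>2)\<^sup>2 / 2 + 2 * (zp - zm)\<^sup>2 * \<sigma>\<^sup>2 / n"
  have "psi_star_inv \<sigma> n i \<eta> (zm, zp) \<le> 4 * max (zp\<^sup>2) (zm\<^sup>2) / n + 2 * sqrt (\<eta> * K)"
    unfolding psi_star_inv_def
  proof (rule INF_le_add_two_sqrt)
    show "bdd_below ((\<lambda>l. (\<eta> + psi \<sigma> n i l (zm, zp)) / l) ` {0<..})"
      using psi_bounds(1)[OF assms(1,2)] assms(3) by (intro bdd_belowI[of _ 0]) auto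
  next
    fix l :: real
    assume "l > 0"
    have "psi \<sigma> n i l (zm, zp) / l \<le> (l\<^sup>2 * K + l * (4 * max (zp\<^sup>2) (zm\<^sup>2) / n)) / l"
      using psi_bounds(2)[OF assms(1,2)] \<open>l > 0\<close> unfolding K_def by (intro divide_right_mono) simp_all
    then show "(\<eta> + psi \<sigma> n i l (zm, zp)) / l \<le> \<eta> / l + l * K + 4 * max (zp\<^sup>2) (zm\<^sup>2) / n"
      using \<open>l > 0\<close> by (simp add: add_divide_distrib power2_eq_square)
  qed (use assms(3) in \<open>simp_all add: K_def\<close>)
  also have "2 * sqrt (\<eta> * K) = sqrt (2 * \<eta>) * sqrt (2 * K)"
    using real_sqrt_mult by auto
  also have "2 * K = (zp\<^sup>2 - zm\<^sup>2)\<^sup>2 + 4 * (zp - zm)\<^sup>2 * \<sigma>\<^sup>2 / n"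
    by (simp add: K_def)
  finally show ?thesis .
qed

theorem lemma5:
  fixes \<sigma> \<eta> zm zp :: real and n i :: nat
  assumes "\<sigma> > 0" and "n \<ge> 2" and "i < n" and "\<eta> \<ge> 0"
  shows "(\<bar>zp\<bar> \<noteq> \<bar>zm\<bar> \<longrightarrow>
            psi_star_inv \<sigma> n i \<eta> (zm, zp) \<le>
              \<bar>zp^2 - zm^2\<bar> * sqrt (2 * \<eta>)
              + 2 * \<sigma>^2 * (zp - zm)^2 / (real n * \<bar>zp^2 - zm^2\<bar>) * sqrt (2 * \<eta>)
              + 4 * max (zp^2) (zm^2) / real n)
       \<and> (\<bar>zp\<bar> = \<bar>zm\<bar> \<longrightarrow>
            psi_star_inv \<sigma> n i \<eta> (zm, zp) \<le>
              4 * \<sigma> * sqrt (2 * \<eta> / real n) * \<bar>zp\<bar> + 4 * max (zp^2) (zm^2) / real n)"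
proof -
  define D where "D = zp\<^sup>2 - zm\<^sup>2"
  define q where "q = 4 * (zp - zm)\<^sup>2 * \<sigma>\<^sup>2 / n"
  have main: "psi_star_inv \<sigma> n i \<eta> (zm, zp) \<le> 4 * max (zp\<^sup>2) (zm\<^sup>2) / n + sqrt (2 * \<eta>) * sqrt (D\<^sup>2 + q)"
    unfolding D_def q_def using assms(1,3,4) by (rule psi_star_inv_le)
  show ?thesis
  proof (intro conjI impI)
    assume "\<bar>zp\<bar> \<noteq> \<bar>zm\<bar>"
    then have "zp\<^sup>2 \<noteq> zm\<^sup>2"
      by (metis power2_abs real_sqrt_abs)
    then have "D \<noteq> 0"
      by (simp add: D_def)
    then have "sqrt (2 * \<eta>) * sqrt (D\<^sup>2 + q) \<le> sqrt (2 * \<eta>) * (\<bar>D\<bar> + q / (2 * \<bar>D\<bar>))"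
      using assms(4) by (intro mult_left_mono sqrt_square_add_le) (simp_all add: q_def)
    with main show "psi_star_inv \<sigma> n i \<eta> (zm, zp) \<le> \<bar>zp^2 - zm^2\<bar> * sqrt (2 * \<eta>)
        + 2 * \<sigma>^2 * (zp - zm)^2 / (real n * \<bar>zp^2 - zm^2\<bar>) * sqrt (2 * \<eta>) + 4 * max (zp^2) (zm^2) / real n"
      by (simp add: D_def q_def algebra_simps)
  next
    assume "\<bar>zp\<bar> = \<bar>zm\<bar>"
    then have "D = 0" and "\<bar>zp - zm\<bar> \<le> 2 * \<bar>zp\<bar>"
      using abs_triangle_ineq4[of zp zm] by (simp_all add: D_def, metis power2_abs)
    then have "sqrt (2 * \<eta>) * sqrt (D\<^sup>2 + q) = 2 * \<sigma> * sqrt (2 * \<eta> / n) * \<bar>zp - zm\<bar>"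
      using assms(1) by (simp add: q_def real_sqrt_mult real_sqrt_divide power_mult_distrib)
    also have "\<dots> \<le> 2 * \<sigma> * sqrt (2 * \<eta> / n) * (2 * \<bar>zp\<bar>)"
      using \<open>\<bar>zp - zm\<bar> \<le> 2 * \<bar>zp\<bar>\<close> assms(1,4) by (intro mult_left_mono) simp_all
    finally show "psi_star_inv \<sigma> n i \<eta> (zm, zp) \<le> 4 * \<sigma> * sqrt (2 * \<eta> / real n) * \<bar>zp\<bar> + 4 * max (zp^2) (zm^2) / real n"
      using main by (simp add: mult_ac)
  qed
qed

end
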